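(* Let $Q$ be a quiver, $\Bbbk$ an algebraically closed field, and $I\subset \Bbbk Q$ a non-zero two-sided ideal of the path algebra. Let $a\in I$ be written as $a=\sum_{\omega}c_\omega\,\omega$ (finite sum over paths $\omega$ of $Q$, $c_\omega\in\Bbbk$). Then every path $\omega$ with $c_\omega\neq 0$ which is the only path of $Q$ having its head and its tail (i.e. $\omega\in\mathcal{A}$) belongs to $I$.
   Context: Paths of $Q$ include the trivial paths $\varepsilon_x$ at each vertex $x$. Each path $\omega$ has a head $\mathbf{h}(\omega)$ and tail $\mathbf{t}(\omega)$; the product $\omega_1\omega_2$ of paths in $\Bbbk Q$ is their concatenation (first $\omega_2$, then $\omega_1$) if $\mathbf{h}(\omega_2)=\mathbf{t}(\omega_1)$ and $0$ otherwise; the paths form a basis of $\Bbbk Q$. $\mathcal{A}$ denotes the set of paths $\omega$ such that no other path $\upsilon\ne\omega$ satisfies $\mathbf{h}(\upsilon)=\mathbf{h}(\omega)$ and $\mathbf{t}(\upsilon)=\mathbf{t}(\omega)$. *)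

theory Defs
  imports "HOL-Computational_Algebra.Polynomial"
begin

text \<open>A quiver is given by a vertex type 'v, an arrow type 'a and functions
  hd_arr (head) and tl_arr (tail) : 'a => 'v; an arrow goes from its tail to its head.
  A path is a pair (x, as): a start vertex x (its tail) and the list of arrows
  in traversal order. (x, []) is the trivial path at x.\<close>

type_synonym ('v, 'a) qpath = "'v \<times> 'a list"

definition is_path :: "('a \<Rightarrow> 'v) \<Rightarrow> ('a \<Rightarrow> 'v) \<Rightarrow> ('v, 'a) qpath \<Rightarrow> bool" where
  "is_path hq tq p = (case p of (x, as) \<Rightarrow>
     (as = [] \<or> (tq (hd as) = x \<and> (\<forall>i. Suc i < length as \<longrightarrow> hq (as ! i) = tq (as ! Suc i)))))"

definition ptail :: "('v, 'a) qpath \<Rightarrow> 'v" where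
  "ptail p = fst p"

definition phead :: "('a \<Rightarrow> 'v) \<Rightarrow> ('v, 'a) qpath \<Rightarrow> 'v" where
  "phead hq p = (if snd p = [] then fst p else hq (last (snd p)))"

text \<open>Product of paths p1 p2: first p2, then p1; defined iff head p2 = tail p1.\<close>
definition pconcat :: "('a \<Rightarrow> 'v) \<Rightarrow> ('v, 'a) qpath \<Rightarrow> ('v, 'a) qpath \<Rightarrow> ('v, 'a) qpath option" where
  "pconcat hq p1 p2 = (if phead hq p2 = ptail p1 then Some (ptail p2, snd p2 @ snd p1) else None)"

definition path_alg :: "('a \<Rightarrow> 'v) \<Rightarrow> ('a \<Rightarrow> 'v) \<Rightarrow> (('v, 'a) qpath \<Rightarrow> 'k::field) set" where
  "path_alg hq tq = {f. finite {p. f p \<noteq> 0} \<and> (\<forall>p. f p \<noteq> 0 \<longrightarrow> is_path hq tq p)}"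

definition pbasis :: "('v, 'a) qpath \<Rightarrow> (('v, 'a) qpath \<Rightarrow> 'k::field)" where
  "pbasis p = (\<lambda>q. if q = p then 1 else 0)"

definition pa_mult :: "('a \<Rightarrow> 'v) \<Rightarrow> (('v, 'a) qpath \<Rightarrow> 'k::field) \<Rightarrow> (('v, 'a) qpath \<Rightarrow> 'k)
    \<Rightarrow> (('v, 'a) qpath \<Rightarrow> 'k)" where
  "pa_mult hq f g = (\<lambda>w. \<Sum>(p1, p2) \<in> {(p1, p2). f p1 \<noteq> 0 \<and> g p2 \<noteq> 0 \<and> pconcat hq p1 p2 = Some w}.
      f p1 * g p2)"

definition two_sided_ideal :: "('a \<Rightarrow> 'v) \<Rightarrow> ('a \<Rightarrow> 'v) \<Rightarrow> (('v, 'a) qpath \<Rightarrow> 'k::field) set \<Rightarrow> bool" where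
  "two_sided_ideal hq tq I \<longleftrightarrow>
     I \<subseteq> path_alg hq tq \<and> (\<lambda>_. 0) \<in> I \<and>
     (\<forall>a\<in>I. \<forall>b\<in>I. (\<lambda>w. a w + b w) \<in> I) \<and>
     (\<forall>c. \<forall>a\<in>I. (\<lambda>w. c * a w) \<in> I) \<and>
     (\<forall>a\<in>I. \<forall>b\<in>path_alg hq tq. pa_mult hq a b \<in> I \<and> pa_mult hq b a \<in> I)"

definition in_A :: "('a \<Rightarrow> 'v) \<Rightarrow> ('a \<Rightarrow> 'v) \<Rightarrow> ('v, 'a) qpath \<Rightarrow> bool" where
  "in_A hq tq w \<longleftrightarrow> is_path hq tq w \<and>
     (\<forall>u. is_path hq tq u \<and> phead hq u = phead hq w \<and> ptail u = ptail w \<longrightarrow> u = w)"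

definition alg_closed_field :: "'k::field itself \<Rightarrow> bool" where
  "alg_closed_field _ \<longleftrightarrow> (\<forall>p :: 'k poly. degree p > 0 \<longrightarrow> (\<exists>x. poly p x = 0))"

end

theory Submission
  imports Defs
begin

text \<open>Multiplying by the trivial paths at the two ends of w, i.e. forming
  \<open>\<epsilon>\<^sub>h a \<epsilon>\<^sub>t\<close>, keeps exactly the terms of a
  running from the tail t to the head h of w. For w in A this is the single term
  \<open>a\<^sub>w w\<close>, and rescaling gives w itself.\<close>

lemma pconcat_trivial_left_iff:
  "pconcat hq (y, []) p = Some u \<longleftrightarrow> phead hq p = y \<and> u = p"
  by (cases p) (auto simp: pconcat_def ptail_def)

lemma pconcat_trivial_right_iff:
  "pconcat hq p (x, []) = Some u \<longleftrightarrow> ptail p = x \<and> u = p"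
  by (cases p) (auto simp: pconcat_def ptail_def phead_def)

lemma pbasis_neq_zero_iff: "pbasis p q \<noteq> (0::'k::field) \<longleftrightarrow> q = p"
  by (simp add: pbasis_def)

lemma pbasis_trivial_in_path_alg:
  "pbasis (x, []) \<in> (path_alg hq tq :: (('v, 'a) qpath \<Rightarrow> 'k::field) set)"
proof -
  have "{p. pbasis (x, []) p \<noteq> (0::'k)} = {(x, [])}"
    by (simp add: pbasis_neq_zero_iff)
  then show ?thesis
    by (simp add: path_alg_def pbasis_neq_zero_iff is_path_def)
qed

lemma pa_mult_pbasis_trivial_right:
  fixes f :: "('v, 'a) qpath \<Rightarrow> 'k::field"
  shows "pa_mult hq f (pbasis (x, [])) = (\<lambda>u. if ptail u = x then f u else 0)"
proof
  fix u :: "('v, 'a) qpath"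
  have factor_iff: "(f p1 \<noteq> 0 \<and> pbasis (x, []) p2 \<noteq> (0::'k) \<and> pconcat hq p1 p2 = Some u)
      \<longleftrightarrow> (f u \<noteq> 0 \<and> ptail u = x \<and> p1 = u \<and> p2 = (x, []))" for p1 p2
    using pconcat_trivial_right_iff[of hq p1 x u] unfolding pbasis_neq_zero_iff by blast
  have set_eq: "{(p1, p2). f p1 \<noteq> 0 \<and> pbasis (x, []) p2 \<noteq> (0::'k) \<and> pconcat hq p1 p2 = Some u}
      = (if f u \<noteq> 0 \<and> ptail u = x then {(u, (x, []))} else {})"
    unfolding factor_iff by auto
  show "pa_mult hq f (pbasis (x, [])) u = (if ptail u = x then f u else 0)"
    unfolding pa_mult_def set_eq by (auto simp: pbasis_def)
qed

lemma pa_mult_pbasis_trivial_left: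
  fixes f :: "('v, 'a) qpath \<Rightarrow> 'k::field"
  shows "pa_mult hq (pbasis (y, [])) f = (\<lambda>u. if phead hq u = y then f u else 0)"
proof
  fix u :: "('v, 'a) qpath"
  have factor_iff: "(pbasis (y, []) p1 \<noteq> (0::'k) \<and> f p2 \<noteq> 0 \<and> pconcat hq p1 p2 = Some u)
      \<longleftrightarrow> (f u \<noteq> 0 \<and> phead hq u = y \<and> p1 = (y, []) \<and> p2 = u)" for p1 p2
    using pconcat_trivial_left_iff[of hq y p2 u] unfolding pbasis_neq_zero_iff by blast
  have set_eq: "{(p1, p2). pbasis (y, []) p1 \<noteq> (0::'k) \<and> f p2 \<noteq> 0 \<and> pconcat hq p1 p2 = Some u}
      = (if f u \<noteq> 0 \<and> phead hq u = y then {((y, []), u)} else {})"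
    unfolding factor_iff by auto
  show "pa_mult hq (pbasis (y, [])) f u = (if phead hq u = y then f u else 0)"
    unfolding pa_mult_def set_eq by (auto simp: pbasis_def)
qed

lemma pa_mult_pbasis_trivial_both:
  fixes f :: "('v, 'a) qpath \<Rightarrow> 'k::field"
  shows "pa_mult hq (pbasis (y, [])) (pa_mult hq f (pbasis (x, [])))
    = (\<lambda>u. if ptail u = x \<and> phead hq u = y then f u else 0)"
  by (auto simp: pa_mult_pbasis_trivial_left pa_mult_pbasis_trivial_right)

lemma two_sided_ideal_pa_mult_right:
  "two_sided_ideal hq tq I \<Longrightarrow> f \<in> I \<Longrightarrow> g \<in> path_alg hq tq \<Longrightarrow> pa_mult hq f g \<in> I"
  by (simp add: two_sided_ideal_def)

lemma two_sided_ideal_pa_mult_left: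
  "two_sided_ideal hq tq I \<Longrightarrow> f \<in> I \<Longrightarrow> g \<in> path_alg hq tq \<Longrightarrow> pa_mult hq g f \<in> I"
  by (simp add: two_sided_ideal_def)

lemma two_sided_ideal_smult:
  "two_sided_ideal hq tq I \<Longrightarrow> f \<in> I \<Longrightarrow> (\<lambda>u. c * f u) \<in> I"
  by (simp add: two_sided_ideal_def)

lemma two_sided_ideal_pa_mult_trivial_both:
  assumes "two_sided_ideal hq tq I" and "f \<in> I"
  shows "pa_mult hq (pbasis (y, [])) (pa_mult hq f (pbasis (x, []))) \<in> I"
  by (intro two_sided_ideal_pa_mult_left[OF assms(1)] two_sided_ideal_pa_mult_right[OF assms]
      pbasis_trivial_in_path_alg)

lemma in_A_restrict_ends:
  assumes "in_A hq tq w" and "f \<in> path_alg hq tq"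
  shows "(\<lambda>u. if ptail u = ptail w \<and> phead hq u = phead hq w then f u else 0)
    = (\<lambda>u. f w * pbasis w u)"
proof
  fix u
  show "(if ptail u = ptail w \<and> phead hq u = phead hq w then f u else 0) = f w * pbasis w u"
  proof (cases "f u = 0")
    case False
    then have "is_path hq tq u"
      using assms(2) unfolding path_alg_def by blast
    then have "ptail u = ptail w \<and> phead hq u = phead hq w \<longrightarrow> u = w"
      using assms(1) unfolding in_A_def by blast
    then show ?thesis
      by (auto simp: pbasis_def)
  qed (auto simp: pbasis_def)
qed

theorem lemma1:
  fixes hq tq :: "'a \<Rightarrow> 'v"
    and I :: "(('v, 'a) qpath \<Rightarrow> 'k::field) set"
    and a :: "('v, 'a) qpath \<Rightarrow> 'k"
    and w :: "('v, 'a) qpath"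
  assumes "alg_closed_field TYPE('k)"
    and "two_sided_ideal hq tq I"
    and "I \<noteq> {\<lambda>_. 0}"
    and "a \<in> I"
    and "a w \<noteq> 0"
    and "in_A hq tq w"
  shows "pbasis w \<in> I"
proof -
  have "a \<in> path_alg hq tq"
    using assms(2,4) by (auto simp: two_sided_ideal_def)
  then have "(\<lambda>u. a w * pbasis w u) \<in> I"
    using two_sided_ideal_pa_mult_trivial_both[OF assms(2,4), of "phead hq w" "ptail w"]
    by (simp add: pa_mult_pbasis_trivial_both in_A_restrict_ends[OF assms(6)])
  then have "(\<lambda>u. inverse (a w) * (a w * pbasis w u)) \<in> I"
    by (rule two_sided_ideal_smult[OF assms(2)])
  moreover have "(\<lambda>u. inverse (a w) * (a w * pbasis w u)) = pbasis w"
    using assms(5) by (simp add: fun_eq_iff)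
  ultimately show ?thesis
    by simp
qed

end
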